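(* Let $f\in\mathcal{E}$ have infinite order. Then exactly one of the following holds: (a) all fundamental discontinuities of $f$ are eventually resolving, in which case $d(f^n)$ is bounded independently of $n$; (b) $f$ has $k\geq 1$ nonresolving fundamental discontinuities, in which case $d(f^n)$ has linear growth on the order of $k|n|$ (i.e. $d(f^n)/|n|\to k$ as $|n|\to\infty$).
   Context: Identify $\mathbb{T}^1=\mathbb{R}/\mathbb{Z}$ with $[0,1)$. An interval exchange transformation is a bijection $f:\mathbb{T}^1\to\mathbb{T}^1$ for which there is a partition of $[0,1)$ into finitely many half-open intervals $[a,b)$ on each of which $f$ is a translation $x\mapsto x+c\pmod 1$; such maps are right-continuous. $\mathcal{E}$ is the group of interval exchanges. $D(f)$ is the (finite) set of points where $f$ is discontinuous as a map of the circle $\mathbb{T}^1$, and $d(f)=|D(f)|$. $\mathrm{Per}(f)$ is the set of periodic points, and $D_{np}(f)=D(f)\setminus\mathrm{Per}(f)$. A point $x\in D_{np}(f)$ is a fundamental discontinuity if $f$ is continuous at $f^{-i}(x)$ for all $i\geq 1$. Let $f_-$ be the left-continuous version of $f$ ($f_-(x)=\lim_{y\to x^-}f(y)$) and $f_+=f$. The stabilization time of $f$ is the smallest positive integer $n_0$ such that $f$ is continuous at $f_+^n(x)$ and $f_-^n(x)$ for all $n\geq n_0$ and all fundamental discontinuities $x$. A fundamental discontinuity $x$ is eventually resolving if $f_+^{n_0}(x)=f_-^{n_0}(x)$ (then $f_+^n(x)=f_-^n(x)$ for all $n\ge n_0$), and nonresolving otherwise (then $f_+^n(x)\neq f_-^n(x)$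 for all $n\ge n_0$). *)

theory Defs
  imports Complex_Main
begin

text \<open>The circle T^1 = R/Z is identified with [0,1). A self-map of the circle is
represented by a function real => real of which only the values on [0,1) matter.\<close>

definition circ_dist :: "real \<Rightarrow> real \<Rightarrow> real" where
  "circ_dist a b = min (frac (a - b)) (frac (b - a))"

definition iet :: "(real \<Rightarrow> real) \<Rightarrow> bool" where
  "iet f \<longleftrightarrow> bij_betw f {0..<1} {0..<1} \<and>
     (\<exists>A. finite A \<and> 0 \<in> A \<and> A \<subseteq> {0..<1} \<and>
        (\<forall>a\<in>A. \<exists>c. \<forall>x. a \<le> x \<and> x < 1 \<and> (\<forall>b\<in>A. a < b \<longrightarrow> x < b)
                        \<longrightarrow> f x = frac (x + c)))"

definition ipow :: "(real \<Rightarrow> real) \<Rightarrow> int \<Rightarrow> (real \<Rightarrow> real)" where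
  "ipow f n = (if n \<ge> 0 then f ^^ nat n else (inv_into {0..<1} f) ^^ nat (- n))"

definition circ_cont :: "(real \<Rightarrow> real) \<Rightarrow> real \<Rightarrow> bool" where
  "circ_cont g x \<longleftrightarrow>
     (\<forall>e>0. \<exists>d>0. \<forall>y. \<bar>y - x\<bar> < d \<longrightarrow> circ_dist (g (frac y)) (g x) < e)"

definition disc :: "(real \<Rightarrow> real) \<Rightarrow> real set" where
  "disc g = {x \<in> {0..<1}. \<not> circ_cont g x}"

definition dnum :: "(real \<Rightarrow> real) \<Rightarrow> nat" where
  "dnum g = card (disc g)"

definition per :: "(real \<Rightarrow> real) \<Rightarrow> real set" where
  "per f = {x \<in> {0..<1}. \<exists>n>0. (f ^^ n) x = x}"

definition disc_np :: "(real \<Rightarrow> real) \<Rightarrow> real set" where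
  "disc_np f = disc f - per f"

definition fundamental :: "(real \<Rightarrow> real) \<Rightarrow> real \<Rightarrow> bool" where
  "fundamental f x \<longleftrightarrow> x \<in> disc_np f \<and>
     (\<forall>i\<ge>1. circ_cont f ((inv_into {0..<1} f ^^ i) x))"

definition left_version :: "(real \<Rightarrow> real) \<Rightarrow> real \<Rightarrow> real" where
  "left_version f x = (THE v. v \<in> {0..<1} \<and>
     (\<forall>e>0. \<exists>d>0. \<forall>y. x - d < y \<and> y < x \<longrightarrow> circ_dist (f (frac y)) v < e))"

definition stab_time :: "(real \<Rightarrow> real) \<Rightarrow> nat" where
  "stab_time f = (LEAST n0. n0 > 0 \<and> (\<forall>n\<ge>n0. \<forall>x. fundamental f x \<longrightarrow>
       circ_cont f ((f ^^ n) x) \<and> circ_cont f ((left_version f ^^ n) x)))"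

definition eventually_resolving :: "(real \<Rightarrow> real) \<Rightarrow> real \<Rightarrow> bool" where
  "eventually_resolving f x \<longleftrightarrow> fundamental f x \<and>
     (f ^^ stab_time f) x = (left_version f ^^ stab_time f) x"

definition nonresolving :: "(real \<Rightarrow> real) \<Rightarrow> real \<Rightarrow> bool" where
  "nonresolving f x \<longleftrightarrow> fundamental f x \<and>
     (f ^^ stab_time f) x \<noteq> (left_version f ^^ stab_time f) x"

end

theory Submission
  imports Defs
begin

text \<open>
  Write \<open>f\<^sub>-\<close> for the left-continuous version of \<open>f\<close>. Both \<open>f\<close> and \<open>f\<^sub>-\<close> are injective, and
  \<open>x\<close> is a discontinuity of \<open>f\<^sup>n\<close> exactly when \<open>f\<^sup>n x \<noteq> f\<^sub>-\<^sup>n x\<close>. For such \<open>x\<close> let \<open>j < n\<close> be the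
  first time its forward orbit meets \<open>D(f)\<close>, so that \<open>x = f\<^sup>-\<^sup>j y\<close> with \<open>y \<in> D(f)\<close>. If \<open>y\<close> is not
  fundamental, its backward orbit returns to \<open>D(f)\<close> after boundedly many steps, which leaves
  boundedly many such \<open>x\<close>; if \<open>y\<close> is eventually resolving, then \<open>j > n - n\<^sub>0\<close>; and if \<open>y\<close> is
  nonresolving, every \<open>j \<le> n - n\<^sub>0\<close> does occur. Hence \<open>d(f\<^sup>n) = k n + O(1)\<close>, where \<open>k\<close> is the
  number of nonresolving fundamental discontinuities, and \<open>d(f\<^sup>-\<^sup>n) = d(f\<^sup>n)\<close> because \<open>f\<^sup>n\<close> maps
  \<open>D(f\<^sup>n)\<close> bijectively onto \<open>D(f\<^sup>-\<^sup>n)\<close>.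
\<close>

lemma circ_dist_le_abs_diff_int: "circ_dist u v \<le> \<bar>u - v - of_int k\<bar>"
proof (cases "u - v - of_int k \<ge> 0")
  case True
  hence "k \<le> \<lfloor>u - v\<rfloor>" by (simp add: le_floor_iff)
  hence "frac (u - v) \<le> u - v - of_int k" by (simp add: frac_def)
  thus ?thesis using True unfolding circ_dist_def by simp
next
  case False
  hence "-k \<le> \<lfloor>v - u\<rfloor>" by (simp add: le_floor_iff)
  hence "frac (v - u) \<le> v - u + of_int k" by (simp add: frac_def)
  thus ?thesis using False unfolding circ_dist_def by simp
qed

lemma circ_dist_eq_abs_diff_int: "\<exists>k. circ_dist u v = \<bar>u - v - of_int k\<bar>"
proof (cases "frac (u - v) \<le> frac (v - u)")
  case True
  hence "circ_dist u v = \<bar>u - v - of_int \<lfloor>u - v\<rfloor>\<bar>"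
    unfolding circ_dist_def by (simp add: frac_def)
  thus ?thesis by blast
next
  case False
  have "circ_dist u v = frac (v - u)" using False unfolding circ_dist_def by simp
  also have "\<dots> = \<bar>u - v - of_int (- \<lfloor>v - u\<rfloor>)\<bar>"
    unfolding frac_def of_int_minus by linarith
  finally show ?thesis by blast
qed

lemma circ_dist_commute: "circ_dist u v = circ_dist v u"
  unfolding circ_dist_def by simp

lemma circ_dist_le_abs_diff: "circ_dist u v \<le> \<bar>u - v\<bar>"
  using circ_dist_le_abs_diff_int[of u v 0] by simp

lemma circ_dist_triangle: "circ_dist u w \<le> circ_dist u v + circ_dist v w"
proof -
  obtain k1 where k1: "circ_dist u v = \<bar>u - v - of_int k1\<bar>" using circ_dist_eq_abs_diff_int by blast
  obtain k2 where k2: "circ_dist v w = \<bar>v - w - of_int k2\<bar>" using circ_dist_eq_abs_diff_int by blast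
  have "circ_dist u w \<le> \<bar>u - w - of_int (k1 + k2)\<bar>" by (rule circ_dist_le_abs_diff_int)
  also have "\<dots> \<le> \<bar>u - v - of_int k1\<bar> + \<bar>v - w - of_int k2\<bar>" by simp
  finally show ?thesis using k1 k2 by simp
qed

lemma circ_dist_shift_int:
  assumes "u - v = u' - v' + of_int m"
  shows "circ_dist u v = circ_dist u' v'"
proof -
  have le: "circ_dist u v \<le> circ_dist u' v'"
    if "u - v = u' - v' + of_int m" for u v u' v' :: real and m
  proof -
    obtain k where k: "circ_dist u' v' = \<bar>u' - v' - of_int k\<bar>" using circ_dist_eq_abs_diff_int by blast
    have "circ_dist u v \<le> \<bar>u - v - of_int (k + m)\<bar>" by (rule circ_dist_le_abs_diff_int)
    thus ?thesis using k that by simp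
  qed
  show ?thesis using le[OF assms] le[of u' v' u v "-m"] assms by force
qed

lemma circ_dist_frac_left [simp]: "circ_dist (frac a) b = circ_dist a b"
  by (rule circ_dist_shift_int[of _ _ _ _ "- \<lfloor>a\<rfloor>"]) (simp add: frac_def)

lemma circ_dist_frac_right [simp]: "circ_dist a (frac b) = circ_dist a b"
  by (rule circ_dist_shift_int[of _ _ _ _ "\<lfloor>b\<rfloor>"]) (simp add: frac_def)

lemma circ_dist_frac_le: "circ_dist (frac a) (frac b) \<le> \<bar>a - b\<bar>"
  using circ_dist_le_abs_diff[of a b] by simp

lemma eq_if_circ_dist_less:
  assumes u: "u \<in> {0..<1}" and v: "v \<in> {0..<1}" and small: "\<And>e. e > 0 \<Longrightarrow> circ_dist u v < e"
  shows "u = v"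
proof -
  have "circ_dist u v \<ge> 0" unfolding circ_dist_def by simp
  hence "circ_dist u v = 0" using small[of "circ_dist u v"] by linarith
  then obtain k where "of_int k = u - v" using circ_dist_eq_abs_diff_int[of u v] by force
  moreover from this have "k = 0" using u v by (fastforce simp: abs_less_iff)
  ultimately show ?thesis by simp
qed

lemma frac_in_unit_interval: "frac a \<in> {0..<1}"
  by (simp add: frac_lt_1)

lemma frac_shift: "v = frac (x + c) \<Longrightarrow> frac (y + c) = frac (y - x + v)"
proof -
  assume v: "v = frac (x + c)"
  have "y + c = (y - x + v) + of_int \<lfloor>x + c\<rfloor>" by (simp add: v frac_def)
  thus ?thesis by (simp only: frac_add_of_int_right)
qed

lemma funpow_in_invariant:
  assumes "\<And>z. z \<in> A \<Longrightarrow> g z \<in> A" and "x \<in> A"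
  shows "(g ^^ n) x \<in> A"
  using assms by (induction n) auto

lemma funpow_split: "j \<le> n \<Longrightarrow> (g ^^ n) x = (g ^^ (n - j)) ((g ^^ j) x)"
  by (metis funpow_add comp_apply le_add_diff_inverse2)

lemma inj_on_funpow:
  assumes inj: "inj_on g A" and into: "\<And>z. z \<in> A \<Longrightarrow> g z \<in> A"
  shows "inj_on (g ^^ n) A"
proof (induction n)
  case (Suc n)
  have "(g ^^ n) ` A \<subseteq> A" using funpow_in_invariant[of A g] into by blast
  hence "inj_on (g \<circ> g ^^ n) A" using Suc.IH inj by (blast intro: comp_inj_on inj_on_subset)
  thus ?case by (simp add: comp_def)
qed simp

lemma inj_orbit_if_aperiodic:
  assumes inj: "inj_on g A" and into: "\<And>z. z \<in> A \<Longrightarrow> g z \<in> A" and y: "y \<in> A"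
    and aperiodic: "\<And>p. p > 0 \<Longrightarrow> (g ^^ p) y \<noteq> y"
  shows "inj (\<lambda>m. (g ^^ m) y)"
proof -
  have "(g ^^ a) y \<noteq> (g ^^ b) y" if "a < b" for a b
  proof
    assume eq: "(g ^^ a) y = (g ^^ b) y"
    have "(g ^^ a) ((g ^^ (b - a)) y) = (g ^^ a) y"
      using that eq by (metis funpow_add comp_apply le_add_diff_inverse less_imp_le)
    hence "(g ^^ (b - a)) y = y"
      using inj_onD[OF inj_on_funpow[OF inj into]] funpow_in_invariant[of A g, OF into] y by blast
    thus False using aperiodic[of "b - a"] that by simp
  qed
  thus ?thesis unfolding inj_def by (metis linorder_neqE_nat)
qed

section \<open>Maps that are locally translations\<close>

text \<open>The pieces of an interval exchange do not survive composition, but this local form does.\<close>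

definition local_translation :: "(real \<Rightarrow> real) \<Rightarrow> bool" where
  "local_translation g \<longleftrightarrow> (\<forall>x\<in>{0..<1}. g x \<in> {0..<1} \<and>
     (\<exists>\<delta>>0. \<exists>c. \<forall>y. x - \<delta> < y \<and> y < x \<longrightarrow> g (frac y) = frac (y + c)) \<and>
     (\<exists>\<delta>>0. \<exists>c. \<forall>y. x \<le> y \<and> y < x + \<delta> \<longrightarrow> g (frac y) = frac (y + c)))"

lemma local_translation_in:
  "local_translation g \<Longrightarrow> x \<in> {0..<1} \<Longrightarrow> g x \<in> {0..<1}"
  unfolding local_translation_def by blast

lemma local_translation_left:
  "local_translation g \<Longrightarrow> x \<in> {0..<1} \<Longrightarrow>
     \<exists>\<delta>>0. \<exists>c. \<forall>y. x - \<delta> < y \<and> y < x \<longrightarrow> g (frac y) = frac (y + c)"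
  unfolding local_translation_def by blast

lemma local_translation_right:
  "local_translation g \<Longrightarrow> x \<in> {0..<1} \<Longrightarrow>
     \<exists>\<delta>>0. \<exists>c. \<forall>y. x \<le> y \<and> y < x + \<delta> \<longrightarrow> g (frac y) = frac (y + c)"
  unfolding local_translation_def by blast

lemma right_translation_at:
  "x \<in> {0..<1} \<Longrightarrow> \<delta> > 0 \<Longrightarrow> \<forall>y. x \<le> y \<and> y < x + \<delta> \<longrightarrow> g (frac y) = frac (y + c)
     \<Longrightarrow> g x = frac (x + c)"
  by (metis frac_eq_id less_add_same_cancel1 order_refl)

lemma left_limit_translation:
  assumes x: "x \<in> {0..<1}" and \<delta>: "\<delta> > 0"
    and h: "\<forall>y. x - \<delta> < y \<and> y < x \<longrightarrow> g (frac y) = frac (y + c)" and e: "e > 0"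
  shows "\<exists>d>0. \<forall>y. x - d < y \<and> y < x \<longrightarrow> circ_dist (g (frac y)) (frac (x + c)) < e"
proof (intro exI[of _ "min \<delta> e"] conjI allI impI)
  show "min \<delta> e > 0" using \<delta> e by simp
  fix y assume y: "x - min \<delta> e < y \<and> y < x"
  have "circ_dist (g (frac y)) (frac (x + c)) = circ_dist (frac (y + c)) (frac (x + c))"
    using h y by auto
  also have "\<dots> \<le> \<bar>(y + c) - (x + c)\<bar>" by (rule circ_dist_frac_le)
  finally show "circ_dist (g (frac y)) (frac (x + c)) < e" using y by (auto simp: min_def split: if_splits)
qed

lemma left_limit_unique:
  assumes x: "x \<in> {0..<1}" and \<delta>: "\<delta> > 0"
    and h: "\<forall>y. x - \<delta> < y \<and> y < x \<longrightarrow> g (frac y) = frac (y + c)"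
    and v: "v \<in> {0..<1}"
    and lim: "\<forall>e>0. \<exists>d>0. \<forall>y. x - d < y \<and> y < x \<longrightarrow> circ_dist (g (frac y)) v < e"
  shows "v = frac (x + c)"
proof (rule eq_if_circ_dist_less[OF v frac_in_unit_interval])
  fix e :: real assume e: "e > 0"
  obtain d where d: "d > 0" and dd: "\<forall>y. x - d < y \<and> y < x \<longrightarrow> circ_dist (g (frac y)) v < e/2"
    using lim e by (meson half_gt_zero)
  obtain d' where d': "d' > 0"
    and dd': "\<forall>y. x - d' < y \<and> y < x \<longrightarrow> circ_dist (g (frac y)) (frac (x + c)) < e/2"
    using left_limit_translation[OF x \<delta> h, of "e/2"] e by auto
  define y where "y = x - min d d' / 2"
  have y: "x - d < y \<and> y < x" "x - d' < y \<and> y < x" using d d' unfolding y_def by auto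
  have "circ_dist v (frac (x + c)) \<le> circ_dist v (g (frac y)) + circ_dist (g (frac y)) (frac (x + c))"
    by (rule circ_dist_triangle)
  also have "\<dots> < e" using dd y(1) dd' y(2) circ_dist_commute[of v] by fastforce
  finally show "circ_dist v (frac (x + c)) < e" .
qed

lemma left_version_eq_translation:
  assumes x: "x \<in> {0..<1}" and \<delta>: "\<delta> > 0"
    and h: "\<forall>y. x - \<delta> < y \<and> y < x \<longrightarrow> g (frac y) = frac (y + c)"
  shows "left_version g x = frac (x + c)"
  unfolding left_version_def
  using left_limit_translation[OF x \<delta> h] left_limit_unique[OF x \<delta> h] frac_in_unit_interval
  by (intro the_equality) auto

lemma left_version_in:
  "local_translation g \<Longrightarrow> x \<in> {0..<1} \<Longrightarrow> left_version g x \<in> {0..<1}"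
  using local_translation_left[of g x] left_version_eq_translation[of x _ g] frac_in_unit_interval
  by metis

lemma circ_cont_if_translations_agree:
  assumes x: "x \<in> {0..<1}" and \<delta>1: "\<delta>1 > 0" and \<delta>2: "\<delta>2 > 0"
    and h1: "\<forall>y. x - \<delta>1 < y \<and> y < x \<longrightarrow> g (frac y) = frac (y + c)"
    and h2: "\<forall>y. x \<le> y \<and> y < x + \<delta>2 \<longrightarrow> g (frac y) = frac (y + c')"
    and eq: "frac (x + c) = frac (x + c')"
  shows "circ_cont g x"
  unfolding circ_cont_def
proof (intro allI impI)
  fix e :: real assume e: "e > 0"
  have gx: "g x = frac (x + c')" by (rule right_translation_at[OF x \<delta>2 h2])
  show "\<exists>d>0. \<forall>y. \<bar>y - x\<bar> < d \<longrightarrow> circ_dist (g (frac y)) (g x) < e"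
  proof (intro exI[of _ "min (min \<delta>1 \<delta>2) e"] conjI allI impI)
    show "min (min \<delta>1 \<delta>2) e > 0" using \<delta>1 \<delta>2 e by simp
    fix y assume y: "\<bar>y - x\<bar> < min (min \<delta>1 \<delta>2) e"
    have "circ_dist (g (frac y)) (g x) \<le> \<bar>y - x\<bar>"
    proof (cases "y < x")
      case True
      hence "circ_dist (g (frac y)) (g x) = circ_dist (frac (y + c)) (frac (x + c))"
        using h1 y eq gx by auto
      thus ?thesis using circ_dist_frac_le[of "y + c" "x + c"] by simp
    next
      case False
      hence "circ_dist (g (frac y)) (g x) = circ_dist (frac (y + c')) (frac (x + c'))"
        using h2 y gx by auto
      thus ?thesis using circ_dist_frac_le[of "y + c'" "x + c'"] by simp
    qed
    thus "circ_dist (g (frac y)) (g x) < e" using y by simp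
  qed
qed

lemma circ_cont_iff_left_version_eq:
  assumes g: "local_translation g" and x: "x \<in> {0..<1}"
  shows "circ_cont g x \<longleftrightarrow> left_version g x = g x"
proof -
  obtain \<delta>1 c where \<delta>1: "\<delta>1 > 0" and h1: "\<forall>y. x - \<delta>1 < y \<and> y < x \<longrightarrow> g (frac y) = frac (y + c)"
    using local_translation_left[OF g x] by blast
  obtain \<delta>2 c' where \<delta>2: "\<delta>2 > 0" and h2: "\<forall>y. x \<le> y \<and> y < x + \<delta>2 \<longrightarrow> g (frac y) = frac (y + c')"
    using local_translation_right[OF g x] by blast
  have lv: "left_version g x = frac (x + c)" by (rule left_version_eq_translation[OF x \<delta>1 h1])
  have gx: "g x = frac (x + c')" by (rule right_translation_at[OF x \<delta>2 h2])
  show ?thesis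
  proof
    assume cont: "circ_cont g x"
    have "\<forall>e>0. \<exists>d>0. \<forall>y. x - d < y \<and> y < x \<longrightarrow> circ_dist (g (frac y)) (g x) < e"
    proof (intro allI impI)
      fix e :: real assume "e > 0"
      then obtain d where "d > 0" "\<forall>y. \<bar>y - x\<bar> < d \<longrightarrow> circ_dist (g (frac y)) (g x) < e"
        using cont unfolding circ_cont_def by blast
      thus "\<exists>d>0. \<forall>y. x - d < y \<and> y < x \<longrightarrow> circ_dist (g (frac y)) (g x) < e"
        by (intro exI[of _ d]) auto
    qed
    thus "left_version g x = g x"
      using left_limit_unique[OF x \<delta>1 h1 local_translation_in[OF g x]] lv by simp
  next
    assume "left_version g x = g x"
    thus "circ_cont g x" using circ_cont_if_translations_agree[OF x \<delta>1 \<delta>2 h1 h2] lv gx by simp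
  qed
qed

lemma translation_comp_at:
  assumes v: "v = frac (x + c)" and h: "h (frac y) = frac (y + c)"
    and g: "g (frac (y - x + v)) = frac (y - x + v + e)"
  shows "(g \<circ> h) (frac y) = frac (y + (v - x + e))"
  using g unfolding comp_apply h frac_shift[OF v] by (simp add: algebra_simps)

lemma
  assumes g: "local_translation g" and h: "local_translation h"
  shows local_translation_comp: "local_translation (g \<circ> h)"
    and left_version_comp:
      "x \<in> {0..<1} \<Longrightarrow> left_version (g \<circ> h) x = left_version g (left_version h x)"
proof -
  have comp_at: "(g \<circ> h) x \<in> {0..<1} \<and>
     (\<exists>\<delta>>0. \<exists>c. \<forall>y. x - \<delta> < y \<and> y < x \<longrightarrow> (g \<circ> h) (frac y) = frac (y + c)) \<and>
     (\<exists>\<delta>>0. \<exists>c. \<forall>y. x \<le> y \<and> y < x + \<delta> \<longrightarrow> (g \<circ> h) (frac y) = frac (y + c)) \<and>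
     left_version (g \<circ> h) x = left_version g (left_version h x)" if x: "x \<in> {0..<1}" for x
  proof -
    obtain \<delta> c where \<delta>: "\<delta> > 0" and hl: "\<forall>y. x - \<delta> < y \<and> y < x \<longrightarrow> h (frac y) = frac (y + c)"
      using local_translation_left[OF h x] by blast
    define v where "v = frac (x + c)"
    have v: "v \<in> {0..<1}" unfolding v_def by (rule frac_in_unit_interval)
    obtain \<delta>' e where \<delta>': "\<delta>' > 0" and gl: "\<forall>z. v - \<delta>' < z \<and> z < v \<longrightarrow> g (frac z) = frac (z + e)"
      using local_translation_left[OF g v] by blast
    have left: "\<forall>y. x - min \<delta> \<delta>' < y \<and> y < x \<longrightarrow> (g \<circ> h) (frac y) = frac (y + (v - x + e))"
    proof (intro allI impI)
      fix y assume "x - min \<delta> \<delta>' < y \<and> y < x"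
      thus "(g \<circ> h) (frac y) = frac (y + (v - x + e))"
        using hl gl by (intro translation_comp_at[OF v_def]) auto
    qed
    have "left_version (g \<circ> h) x = frac (x + (v - x + e))"
      by (rule left_version_eq_translation[OF x _ left]) (simp add: \<delta> \<delta>')
    moreover have "left_version h x = v"
      unfolding v_def by (rule left_version_eq_translation[OF x \<delta> hl])
    moreover have "left_version g v = frac (v + e)" by (rule left_version_eq_translation[OF v \<delta>' gl])
    ultimately have lv: "left_version (g \<circ> h) x = left_version g (left_version h x)"
      by (simp add: algebra_simps)
    obtain \<delta>2 c' where \<delta>2: "\<delta>2 > 0" and hr: "\<forall>y. x \<le> y \<and> y < x + \<delta>2 \<longrightarrow> h (frac y) = frac (y + c')"
      using local_translation_right[OF h x] by blast
    define u where "u = frac (x + c')"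
    have u: "u \<in> {0..<1}" unfolding u_def by (rule frac_in_unit_interval)
    obtain \<delta>2' e' where \<delta>2': "\<delta>2' > 0"
      and gr: "\<forall>z. u \<le> z \<and> z < u + \<delta>2' \<longrightarrow> g (frac z) = frac (z + e')"
      using local_translation_right[OF g u] by blast
    have right: "\<forall>y. x \<le> y \<and> y < x + min \<delta>2 \<delta>2' \<longrightarrow> (g \<circ> h) (frac y) = frac (y + (u - x + e'))"
    proof (intro allI impI)
      fix y assume "x \<le> y \<and> y < x + min \<delta>2 \<delta>2'"
      thus "(g \<circ> h) (frac y) = frac (y + (u - x + e'))"
        using hr gr by (intro translation_comp_at[OF u_def]) auto
    qed
    have "(g \<circ> h) x \<in> {0..<1}" using local_translation_in[OF g local_translation_in[OF h x]] by simp
    thus ?thesis using left right lv \<delta> \<delta>' \<delta>2 \<delta>2' by (metis min_less_iff_conj)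
  qed
  show "local_translation (g \<circ> h)" unfolding local_translation_def using comp_at by blast
  show "x \<in> {0..<1} \<Longrightarrow> left_version (g \<circ> h) x = left_version g (left_version h x)"
    using comp_at by blast
qed

lemma local_translation_id: "local_translation id"
  unfolding local_translation_def by (intro ballI conjI exI[of _ 1] exI[of _ 0]) auto

lemma left_version_id: "x \<in> {0..<1} \<Longrightarrow> left_version id x = x"
  using left_version_eq_translation[of x 1 id 0] by simp

lemma
  assumes g: "local_translation g"
  shows local_translation_funpow: "local_translation (g ^^ n)"
    and left_version_funpow: "x \<in> {0..<1} \<Longrightarrow> left_version (g ^^ n) x = (left_version g ^^ n) x"
proof -
  have "local_translation (g ^^ n) \<and> (\<forall>x\<in>{0..<1}. left_version (g ^^ n) x = (left_version g ^^ n) x)"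
  proof (induction n)
    case 0
    show ?case using local_translation_id left_version_id by (simp add: id_def)
  next
    case (Suc n)
    thus ?case
      using local_translation_comp[OF g] left_version_comp[OF g] by (simp add: comp_def)
  qed
  thus "local_translation (g ^^ n)" "x \<in> {0..<1} \<Longrightarrow> left_version (g ^^ n) x = (left_version g ^^ n) x"
    by blast+
qed

section \<open>Interval exchanges are local translations\<close>

definition translation_pieces :: "(real \<Rightarrow> real) \<Rightarrow> real set \<Rightarrow> bool" where
  "translation_pieces f A \<longleftrightarrow> finite A \<and> 0 \<in> A \<and> A \<subseteq> {0..<1} \<and>
     (\<forall>a\<in>A. \<exists>c. \<forall>x. a \<le> x \<and> x < 1 \<and> (\<forall>b\<in>A. a < b \<longrightarrow> x < b) \<longrightarrow> f x = frac (x + c))"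

lemma iet_iff_translation_pieces:
  "iet f \<longleftrightarrow> bij_betw f {0..<1} {0..<1} \<and> (\<exists>A. translation_pieces f A)"
  unfolding iet_def translation_pieces_def by simp

lemma translation_pieces_right:
  assumes A: "translation_pieces f A" and x: "x \<in> {0..<1}"
  shows "\<exists>a\<in>A. a \<le> x \<and> (\<exists>\<delta>>0. \<exists>c. \<forall>y. a \<le> y \<and> y < x + \<delta> \<longrightarrow> y < 1 \<and> f y = frac (y + c))"
proof -
  have fin: "finite A" and A0: "0 \<in> A" and AX: "A \<subseteq> {0..<1}"
    and pc: "\<forall>a\<in>A. \<exists>c. \<forall>x. a \<le> x \<and> x < 1 \<and> (\<forall>b\<in>A. a < b \<longrightarrow> x < b) \<longrightarrow> f x = frac (x + c)"
    using A unfolding translation_pieces_def by blast+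
  define S where "S = {a\<in>A. a \<le> x}"
  have Sf: "finite S" "S \<noteq> {}" using fin A0 x unfolding S_def by auto
  define a where "a = Max S"
  have aS: "a \<in> S" unfolding a_def using Sf by simp
  have amax: "\<And>b. b \<in> A \<Longrightarrow> b \<le> x \<Longrightarrow> b \<le> a"
    unfolding a_def by (rule Max_ge[OF Sf(1)]) (simp add: S_def)
  define R where "R = {b\<in>A. x < b}"
  have Rf: "finite R" using fin unfolding R_def by simp
  define t where "t = (if R = {} then 1 else Min R)"
  have xt: "x < t" using Rf AX x unfolding t_def R_def by auto
  have t1: "t \<le> 1"
  proof (cases "R = {}")
    case False
    then obtain b where b: "b \<in> R" by blast
    hence "Min R \<le> b" using Rf by simp
    moreover have "b < 1" using b AX unfolding R_def by auto
    ultimately show ?thesis using False unfolding t_def by simp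
  qed (simp add: t_def)
  have tb: "\<And>b. b \<in> A \<Longrightarrow> x < b \<Longrightarrow> t \<le> b" using Rf unfolding t_def R_def by auto
  obtain c where c: "\<forall>z. a \<le> z \<and> z < 1 \<and> (\<forall>b\<in>A. a < b \<longrightarrow> z < b) \<longrightarrow> f z = frac (z + c)"
    using pc aS unfolding S_def by blast
  have "\<forall>y. a \<le> y \<and> y < x + (t - x) \<longrightarrow> y < 1 \<and> f y = frac (y + c)"
  proof (intro allI impI)
    fix y assume y: "a \<le> y \<and> y < x + (t - x)"
    have "\<forall>b\<in>A. a < b \<longrightarrow> y < b"
    proof (intro ballI impI)
      fix b assume b: "b \<in> A" "a < b"
      hence "x < b" using amax by force
      thus "y < b" using tb[OF b(1)] y by simp
    qed
    thus "y < 1 \<and> f y = frac (y + c)" using c y t1 by auto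
  qed
  moreover have "t - x > 0" using xt by simp
  ultimately show ?thesis using aS unfolding S_def by blast
qed

lemma translation_pieces_right_nbhd:
  assumes A: "translation_pieces f A" and x: "x \<in> {0..<1}"
  shows "\<exists>\<delta>>0. \<exists>c. \<forall>y. x \<le> y \<and> y < x + \<delta> \<longrightarrow> f (frac y) = frac (y + c)"
proof -
  obtain a \<delta> c where a: "a \<le> x" and \<delta>: "\<delta> > 0"
    and h: "\<forall>y. a \<le> y \<and> y < x + \<delta> \<longrightarrow> y < 1 \<and> f y = frac (y + c)"
    using translation_pieces_right[OF A x] by blast
  have "\<forall>y. x \<le> y \<and> y < x + \<delta> \<longrightarrow> f (frac y) = frac (y + c)"
  proof (intro allI impI)
    fix y assume y: "x \<le> y \<and> y < x + \<delta>"
    hence "y < 1 \<and> f y = frac (y + c)" using h a by simp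
    moreover have "frac y = y" using y x calculation by (simp add: frac_eq)
    ultimately show "f (frac y) = frac (y + c)" by simp
  qed
  thus ?thesis using \<delta> by blast
qed

text \<open>At \<open>0\<close> the left neighbourhood wraps around to the last piece, hence the shift by 1.\<close>

lemma translation_pieces_left_nbhd_0:
  assumes A: "translation_pieces f A"
  shows "\<exists>\<delta>>0. \<exists>c. \<forall>y. - \<delta> < y \<and> y < 0 \<longrightarrow> f (frac y) = frac (y + c)"
proof -
  have fin: "finite A" and A0: "0 \<in> A" and AX: "A \<subseteq> {0..<1}"
    and pc: "\<forall>a\<in>A. \<exists>c. \<forall>x. a \<le> x \<and> x < 1 \<and> (\<forall>b\<in>A. a < b \<longrightarrow> x < b) \<longrightarrow> f x = frac (x + c)"
    using A unfolding translation_pieces_def by blast+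
  define a where "a = Max A"
  have aA: "a \<in> A" unfolding a_def using fin A0 by (intro Max_in) auto
  have amax: "\<And>b. b \<in> A \<Longrightarrow> b \<le> a" unfolding a_def using fin by (rule Max_ge)
  have a01: "0 \<le> a" "a < 1" using aA AX by auto
  obtain c where c: "\<forall>z. a \<le> z \<and> z < 1 \<and> (\<forall>b\<in>A. a < b \<longrightarrow> z < b) \<longrightarrow> f z = frac (z + c)"
    using pc aA by blast
  have "\<forall>y. - (1 - a) < y \<and> y < 0 \<longrightarrow> f (frac y) = frac (y + (1 + c))"
  proof (intro allI impI)
    fix y :: real assume y: "- (1 - a) < y \<and> y < 0"
    have "\<lfloor>y\<rfloor> = -1" using y a01 by (simp add: floor_eq_iff)
    hence fy: "frac y = y + 1" unfolding frac_def by simp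
    have "\<forall>b\<in>A. a < b \<longrightarrow> y + 1 < b" using amax by (meson not_le)
    moreover have "a \<le> y + 1" "y + 1 < 1" using y by auto
    ultimately have "f (y + 1) = frac (y + 1 + c)" using c by blast
    thus "f (frac y) = frac (y + (1 + c))" using fy by (simp add: algebra_simps)
  qed
  moreover have "1 - a > 0" using a01 by simp
  ultimately show ?thesis by blast
qed

lemma translation_pieces_left_nbhd:
  assumes A: "translation_pieces f A" and x: "x \<in> {0..<1}"
  shows "\<exists>\<delta>>0. \<exists>c. \<forall>y. x - \<delta> < y \<and> y < x \<longrightarrow> f (frac y) = frac (y + c)"
proof (cases "x = 0")
  case True
  thus ?thesis using translation_pieces_left_nbhd_0[OF A] by simp
next
  case False
  have fin: "finite A" and A0: "0 \<in> A" and AX: "A \<subseteq> {0..<1}"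
    and pc: "\<forall>a\<in>A. \<exists>c. \<forall>x. a \<le> x \<and> x < 1 \<and> (\<forall>b\<in>A. a < b \<longrightarrow> x < b) \<longrightarrow> f x = frac (x + c)"
    using A unfolding translation_pieces_def by blast+
  define S where "S = {a\<in>A. a < x}"
  have Sf: "finite S" "S \<noteq> {}" using fin A0 x False unfolding S_def by auto
  define a where "a = Max S"
  have aS: "a \<in> S" unfolding a_def using Sf by simp
  have amax: "\<And>b. b \<in> A \<Longrightarrow> b < x \<Longrightarrow> b \<le> a"
    unfolding a_def by (rule Max_ge[OF Sf(1)]) (simp add: S_def)
  obtain c where c: "\<forall>z. a \<le> z \<and> z < 1 \<and> (\<forall>b\<in>A. a < b \<longrightarrow> z < b) \<longrightarrow> f z = frac (z + c)"
    using pc aS unfolding S_def by blast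
  have "\<forall>y. x - (x - a) < y \<and> y < x \<longrightarrow> f (frac y) = frac (y + c)"
  proof (intro allI impI)
    fix y assume y: "x - (x - a) < y \<and> y < x"
    have "a \<ge> 0" using aS AX unfolding S_def by auto
    hence fy: "frac y = y" using y x by (simp add: frac_eq)
    have "\<forall>b\<in>A. a < b \<longrightarrow> y < b"
    proof (intro ballI impI)
      fix b assume "b \<in> A" "a < b"
      hence "x \<le> b" using amax by (meson not_le)
      thus "y < b" using y by simp
    qed
    thus "f (frac y) = frac (y + c)" using c y x fy by auto
  qed
  moreover have "x - a > 0" using aS unfolding S_def by simp
  ultimately show ?thesis by blast
qed

lemma disc_subset_translation_pieces:
  assumes A: "translation_pieces f A"
  shows "disc f \<subseteq> A"
proof
  fix x assume "x \<in> disc f"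
  hence x: "x \<in> {0..<1}" and nc: "\<not> circ_cont f x" unfolding disc_def by auto
  show "x \<in> A"
  proof (rule ccontr)
    assume xA: "x \<notin> A"
    obtain a \<delta> c where a: "a \<in> A" "a \<le> x" and \<delta>: "\<delta> > 0"
      and h: "\<forall>y. a \<le> y \<and> y < x + \<delta> \<longrightarrow> y < 1 \<and> f y = frac (y + c)"
      using translation_pieces_right[OF A x] by blast
    have ax: "a < x" using a xA by (cases "a = x") auto
    have a0: "a \<ge> 0" using a A unfolding translation_pieces_def by auto
    have fx: "f x = frac (x + c)" using h ax \<delta> by auto
    have "circ_cont f x" unfolding circ_cont_def
    proof (intro allI impI)
      fix e :: real assume e: "e > 0"
      show "\<exists>d>0. \<forall>y. \<bar>y - x\<bar> < d \<longrightarrow> circ_dist (f (frac y)) (f x) < e"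
      proof (intro exI[of _ "min (min (x - a) \<delta>) e"] conjI allI impI)
        show "min (min (x - a) \<delta>) e > 0" using ax \<delta> e by simp
        fix y assume y: "\<bar>y - x\<bar> < min (min (x - a) \<delta>) e"
        hence ay: "a \<le> y \<and> y < x + \<delta>" by auto
        hence fy: "y < 1 \<and> f y = frac (y + c)" using h by blast
        moreover have "frac y = y" using ay a0 fy by (simp add: frac_eq)
        ultimately have "circ_dist (f (frac y)) (f x) = circ_dist (frac (y + c)) (frac (x + c))"
          using fx by simp
        also have "\<dots> \<le> \<bar>(y + c) - (x + c)\<bar>" by (rule circ_dist_frac_le)
        finally show "circ_dist (f (frac y)) (f x) < e" using y by simp
      qed
    qed
    thus False using nc by simp
  qed
qed

lemma iet_local_translation:
  assumes "iet f"
  shows "local_translation f"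
proof -
  obtain A where bij: "bij_betw f {0..<1} {0..<1}" and A: "translation_pieces f A"
    using assms unfolding iet_iff_translation_pieces by blast
  show ?thesis unfolding local_translation_def
    using bij_betw_apply[OF bij] translation_pieces_left_nbhd[OF A] translation_pieces_right_nbhd[OF A]
    by blast
qed

lemma iet_finite_disc:
  assumes "iet f"
  shows "finite (disc f)"
proof -
  obtain A where A: "translation_pieces f A"
    using assms unfolding iet_iff_translation_pieces by blast
  hence "finite A" unfolding translation_pieces_def by blast
  thus ?thesis using disc_subset_translation_pieces[OF A] by (rule finite_subset[rotated])
qed

section \<open>Discontinuities of the inverse\<close>

lemma translation_nbhd_if_circ_cont:
  assumes g: "local_translation g" and x: "x \<in> {0..<1}" and cont: "circ_cont g x"
  shows "\<exists>\<delta>>0. \<forall>y. \<bar>y - x\<bar> < \<delta> \<longrightarrow> g (frac y) = frac (y - x + g x)"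
proof -
  obtain \<delta>1 c where \<delta>1: "\<delta>1 > 0" and h1: "\<forall>y. x - \<delta>1 < y \<and> y < x \<longrightarrow> g (frac y) = frac (y + c)"
    using local_translation_left[OF g x] by blast
  obtain \<delta>2 c' where \<delta>2: "\<delta>2 > 0" and h2: "\<forall>y. x \<le> y \<and> y < x + \<delta>2 \<longrightarrow> g (frac y) = frac (y + c')"
    using local_translation_right[OF g x] by blast
  have "g x = frac (x + c)"
    using cont circ_cont_iff_left_version_eq[OF g x] left_version_eq_translation[OF x \<delta>1 h1] by simp
  moreover have "g x = frac (x + c')" by (rule right_translation_at[OF x \<delta>2 h2])
  ultimately have "\<forall>y. \<bar>y - x\<bar> < min \<delta>1 \<delta>2 \<longrightarrow> g (frac y) = frac (y - x + g x)"
    using h1 h2 frac_shift by (metis abs_diff_less_iff linorder_not_le min_less_iff_conj)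
  thus ?thesis using \<delta>1 \<delta>2 by (intro exI[of _ "min \<delta>1 \<delta>2"]) simp
qed

lemma circ_cont_inv_into_image:
  assumes g: "local_translation g" and bij: "bij_betw g {0..<1} {0..<1}"
    and x: "x \<in> {0..<1}" and cont: "circ_cont g x"
  shows "circ_cont (inv_into {0..<1} g) (g x)"
  unfolding circ_cont_def
proof (intro allI impI)
  fix e :: real assume e: "e > 0"
  obtain \<delta> where \<delta>: "\<delta> > 0" and trans: "\<forall>y. \<bar>y - x\<bar> < \<delta> \<longrightarrow> g (frac y) = frac (y - x + g x)"
    using translation_nbhd_if_circ_cont[OF g x cont] by blast
  have inv_g: "inv_into {0..<1} g (g u) = u" if "u \<in> {0..<1}" for u
    using bij_betw_imp_inj_on[OF bij] that by (rule inv_into_f_f)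
  show "\<exists>d>0. \<forall>w. \<bar>w - g x\<bar> < d \<longrightarrow>
      circ_dist (inv_into {0..<1} g (frac w)) (inv_into {0..<1} g (g x)) < e"
  proof (intro exI[of _ "min \<delta> e"] conjI allI impI)
    show "min \<delta> e > 0" using \<delta> e by simp
    fix w assume w: "\<bar>w - g x\<bar> < min \<delta> e"
    have "g (frac (w - g x + x)) = frac w" using trans w by simp
    hence "inv_into {0..<1} g (frac w) = frac (w - g x + x)"
      using inv_g[OF frac_in_unit_interval] by metis
    hence "circ_dist (inv_into {0..<1} g (frac w)) (inv_into {0..<1} g (g x)) = circ_dist (w - g x + x) x"
      using inv_g[OF x] by simp
    also have "\<dots> \<le> \<bar>w - g x\<bar>" using circ_dist_le_abs_diff[of "w - g x + x" x] by simp
    finally show "circ_dist (inv_into {0..<1} g (frac w)) (inv_into {0..<1} g (g x)) < e"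
      using w by simp
  qed
qed

lemma circ_dist_lift:
  assumes w: "w \<in> {0..<1}" and "circ_dist w x < r"
  shows "\<exists>t. frac t = w \<and> \<bar>t - x\<bar> < r"
proof -
  obtain k where "\<bar>w - x - of_int k\<bar> < r" using assms(2) circ_dist_eq_abs_diff_int by metis
  moreover have "frac (w - of_int k) = w" using w
    by (metis frac_add_of_int_right frac_eq_id of_int_minus diff_conv_add_uminus)
  ultimately show ?thesis by (intro exI[of _ "w - of_int k"]) simp
qed

lemma translation_right_avoids_left_of_image:
  assumes h: "\<forall>y. x \<le> y \<and> y < x + \<delta> \<longrightarrow> g (frac y) = frac (y + c)" and gx: "g x = frac (x + c)"
    and t: "x \<le> t" "t < x + \<delta>" and \<epsilon>: "0 < t - x + \<epsilon>" "t - x + \<epsilon> < 1"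
  shows "g (frac t) \<noteq> frac (g x - \<epsilon>)"
proof
  assume "g (frac t) = frac (g x - \<epsilon>)"
  hence "frac (t + c) = frac (g x - \<epsilon>)" using h t by simp
  then obtain n where n: "t + c = g x - \<epsilon> + of_int n" by (rule frac_eqE)
  have "g x = x + c - of_int \<lfloor>x + c\<rfloor>" using gx unfolding frac_def by simp
  hence "t - x + \<epsilon> = of_int (n - \<lfloor>x + c\<rfloor>)" using n by simp
  thus False using \<epsilon> by (metis of_int_0_less_iff of_int_less_1_iff zless_imp_add1_zle add_0 not_less)
qed

text \<open>Points just left of \<open>g x\<close> have preimages near \<open>x\<close>; they cannot lie just right of \<open>x\<close>,
  where \<open>g\<close> translates by the same amount that takes \<open>x\<close> to \<open>g x\<close>. So they lie left of \<open>x\<close>,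
  which forces the left version of \<open>g\<close> at \<open>x\<close> to be \<open>g x\<close>.\<close>

lemma circ_cont_if_inv_into:
  assumes g: "local_translation g" and bij: "bij_betw g {0..<1} {0..<1}"
    and x: "x \<in> {0..<1}" and cont: "circ_cont (inv_into {0..<1} g) (g x)"
  shows "circ_cont g x"
proof -
  define h where "h = inv_into {0..<1} g"
  have surj: "g ` {0..<1} = {0..<1}" using bij by (rule bij_betw_imp_surj_on)
  have gh: "\<And>z. z \<in> {0..<1} \<Longrightarrow> g (h z) = z" unfolding h_def using surj by (metis f_inv_into_f)
  have hX: "\<And>z. z \<in> {0..<1} \<Longrightarrow> h z \<in> {0..<1}" unfolding h_def using surj by (metis inv_into_into)
  obtain \<delta>1 c where \<delta>1: "\<delta>1 > 0" and h1: "\<forall>y. x - \<delta>1 < y \<and> y < x \<longrightarrow> g (frac y) = frac (y + c)"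
    using local_translation_left[OF g x] by blast
  obtain \<delta>2 c' where \<delta>2: "\<delta>2 > 0" and h2: "\<forall>y. x \<le> y \<and> y < x + \<delta>2 \<longrightarrow> g (frac y) = frac (y + c')"
    using local_translation_right[OF g x] by blast
  define z where "z = g x"
  have z: "z \<in> {0..<1}" unfolding z_def by (rule local_translation_in[OF g x])
  have hz: "h z = x" unfolding z_def h_def using bij_betw_imp_inj_on[OF bij] x by (rule inv_into_f_f)
  have gx: "z = frac (x + c')" unfolding z_def by (rule right_translation_at[OF x \<delta>2 h2])
  have "frac (x + c) = z"
  proof (rule eq_if_circ_dist_less)
    show "frac (x + c) \<in> {0..<1}" by (rule frac_in_unit_interval)
    show "z \<in> {0..<1}" by (rule z)
    fix e :: real assume e: "e > 0"
    define e1 where "e1 = min (min (e/2) \<delta>1) (min \<delta>2 (1/4))"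
    have e1: "e1 > 0" "e1 \<le> e/2" "e1 \<le> \<delta>1" "e1 \<le> \<delta>2" "e1 \<le> 1/4"
      using e \<delta>1 \<delta>2 unfolding e1_def by auto
    obtain d where d: "d > 0" and dd: "\<forall>y. \<bar>y - z\<bar> < d \<longrightarrow> circ_dist (h (frac y)) (h z) < e1"
      using cont e1(1) unfolding circ_cont_def h_def z_def by blast
    define \<epsilon> where "\<epsilon> = min (min d (e/2)) (1/4) / 2"
    have \<epsilon>: "\<epsilon> > 0" "\<epsilon> < d" "\<epsilon> < e/2" "\<epsilon> \<le> 1/8" using d e unfolding \<epsilon>_def by auto
    define y where "y = z - \<epsilon>"
    define w where "w = h (frac y)"
    have wX: "w \<in> {0..<1}" unfolding w_def by (rule hX[OF frac_in_unit_interval])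
    have gw: "g w = frac y" unfolding w_def by (rule gh[OF frac_in_unit_interval])
    have "circ_dist w x < e1" using dd \<epsilon> hz unfolding w_def y_def by simp
    then obtain t where "frac t = w" and tx: "\<bar>t - x\<bar> < e1"
      using circ_dist_lift[OF wX] by blast
    hence gt: "g (frac t) = frac y" using gw by simp
    show "circ_dist (frac (x + c)) z < e"
    proof (cases "t < x")
      case True
      have "frac (t + c) = frac y" using h1 True tx e1 gt by auto
      have "circ_dist (frac (x + c)) z
          \<le> circ_dist (frac (x + c)) (frac (t + c)) + circ_dist (frac (t + c)) z"
        by (rule circ_dist_triangle)
      also have "circ_dist (frac (x + c)) (frac (t + c)) \<le> \<bar>(x + c) - (t + c)\<bar>"
        by (rule circ_dist_frac_le)
      also have "circ_dist (frac (t + c)) z = circ_dist y z" using \<open>frac (t + c) = frac y\<close> by simp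
      also have "\<dots> \<le> \<bar>y - z\<bar>" by (rule circ_dist_le_abs_diff)
      finally show ?thesis using tx e1 \<epsilon> unfolding y_def by simp
    next
      case False
      have "0 < t - x + \<epsilon>" "t - x + \<epsilon> < 1" "t < x + \<delta>2" using False tx e1 \<epsilon> by auto
      hence "g (frac t) \<noteq> frac (z - \<epsilon>)"
        using translation_right_avoids_left_of_image[OF h2 gx[unfolded z_def]] False unfolding z_def by simp
      thus ?thesis using gt unfolding y_def by simp
    qed
  qed
  thus ?thesis
    using circ_cont_iff_left_version_eq[OF g x] left_version_eq_translation[OF x \<delta>1 h1]
    unfolding z_def by simp
qed

lemma disc_subset_unit_interval: "disc g \<subseteq> {0..<1}"
  unfolding disc_def by blast

lemma disc_inv_into:
  assumes g: "local_translation g" and bij: "bij_betw g {0..<1} {0..<1}"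
  shows "disc (inv_into {0..<1} g) = g ` disc g"
proof -
  have surj: "g ` {0..<1} = {0..<1}" using bij by (rule bij_betw_imp_surj_on)
  have "circ_cont (inv_into {0..<1} g) (g x) \<longleftrightarrow> circ_cont g x" if "x \<in> {0..<1}" for x
    using circ_cont_inv_into_image[OF g bij that] circ_cont_if_inv_into[OF g bij that] by blast
  hence "{z \<in> g ` {0..<1}. \<not> circ_cont (inv_into {0..<1} g) z} = g ` disc g"
    unfolding disc_def by auto
  thus ?thesis unfolding disc_def surj .
qed

lemma disc_cong:
  assumes "\<forall>x\<in>{0..<1}. g x = g' x"
  shows "disc g = disc g'"
proof -
  have "\<forall>y. g (frac y) = g' (frac y)" using assms frac_in_unit_interval by blast
  hence "circ_cont g x = circ_cont g' x" if "x \<in> {0..<1}" for x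
    unfolding circ_cont_def using assms that by simp
  thus ?thesis unfolding disc_def by auto
qed

section \<open>Orbits of the discontinuities of an interval exchange\<close>

locale interval_exchange =
  fixes f :: "real \<Rightarrow> real"
  assumes iet: "iet f"
begin

abbreviation f_left :: "real \<Rightarrow> real" where "f_left \<equiv> left_version f"
abbreviation f_inv :: "real \<Rightarrow> real" where "f_inv \<equiv> inv_into {0..<1} f"

lemma bij_f: "bij_betw f {0..<1} {0..<1}"
  using iet unfolding iet_def by blast

lemma local_translation_f: "local_translation f"
  using iet by (rule iet_local_translation)

lemma finite_disc: "finite (disc f)"
  using iet by (rule iet_finite_disc)

lemma inj_f: "inj_on f {0..<1}"
  using bij_f by (rule bij_betw_imp_inj_on)

lemma f_in: "x \<in> {0..<1} \<Longrightarrow> f x \<in> {0..<1}"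
  using local_translation_in[OF local_translation_f] .

lemma f_inv_in: "x \<in> {0..<1} \<Longrightarrow> f_inv x \<in> {0..<1}"
  using bij_betw_imp_surj_on[OF bij_f] by (metis inv_into_into)

lemma f_left_in: "x \<in> {0..<1} \<Longrightarrow> f_left x \<in> {0..<1}"
  using left_version_in[OF local_translation_f] .

lemma f_f_inv: "x \<in> {0..<1} \<Longrightarrow> f (f_inv x) = x"
  using bij_betw_imp_surj_on[OF bij_f] by (metis f_inv_into_f)

lemma f_inv_f: "x \<in> {0..<1} \<Longrightarrow> f_inv (f x) = x"
  using inj_f by (rule inv_into_f_f)

lemma mem_disc_iff: "x \<in> {0..<1} \<Longrightarrow> x \<in> disc f \<longleftrightarrow> f_left x \<noteq> f x"
  unfolding disc_def using circ_cont_iff_left_version_eq[OF local_translation_f] by simp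

lemma funpow_f_in: "x \<in> {0..<1} \<Longrightarrow> (f ^^ n) x \<in> {0..<1}"
  by (rule funpow_in_invariant[OF f_in])

lemma funpow_f_inv_in: "x \<in> {0..<1} \<Longrightarrow> (f_inv ^^ n) x \<in> {0..<1}"
  by (rule funpow_in_invariant[OF f_inv_in])

lemma funpow_f_left_in: "x \<in> {0..<1} \<Longrightarrow> (f_left ^^ n) x \<in> {0..<1}"
  by (rule funpow_in_invariant[OF f_left_in])

lemma funpow_f_funpow_f_inv: "x \<in> {0..<1} \<Longrightarrow> (f ^^ n) ((f_inv ^^ n) x) = x"
proof (induction n arbitrary: x)
  case (Suc n)
  have "(f ^^ Suc n) ((f_inv ^^ Suc n) x) = (f ^^ n) (f (f_inv ((f_inv ^^ n) x)))"
    by (simp add: funpow_swap1)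
  also have "\<dots> = x" using Suc f_f_inv funpow_f_inv_in by simp
  finally show ?case .
qed simp

lemma funpow_f_inv_funpow_f: "x \<in> {0..<1} \<Longrightarrow> (f_inv ^^ n) ((f ^^ n) x) = x"
proof (induction n arbitrary: x)
  case (Suc n)
  have "(f_inv ^^ Suc n) ((f ^^ Suc n) x) = (f_inv ^^ n) (f_inv (f ((f ^^ n) x)))"
    by (simp add: funpow_swap1)
  also have "\<dots> = x" using Suc f_inv_f funpow_f_in by simp
  finally show ?case .
qed simp

lemma inj_on_funpow_f: "inj_on (f ^^ n) {0..<1}"
  using inj_on_funpow[OF inj_f f_in] .

text \<open>Left limits of \<open>f\<close> at distinct points are limits of \<open>f\<close> along disjoint intervals, so
  injectivity of \<open>f\<close> passes to its left version.\<close>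

lemma inj_on_f_left: "inj_on f_left {0..<1}"
proof (rule inj_onI, rule ccontr)
  fix x1 x2 assume x1: "x1 \<in> {0..<1}" and x2: "x2 \<in> {0..<1}"
    and eq: "f_left x1 = f_left x2" and ne: "x1 \<noteq> x2"
  obtain \<delta>1 c1 where \<delta>1: "\<delta>1 > 0" and h1: "\<forall>y. x1 - \<delta>1 < y \<and> y < x1 \<longrightarrow> f (frac y) = frac (y + c1)"
    using local_translation_left[OF local_translation_f x1] by blast
  obtain \<delta>2 c2 where \<delta>2: "\<delta>2 > 0" and h2: "\<forall>y. x2 - \<delta>2 < y \<and> y < x2 \<longrightarrow> f (frac y) = frac (y + c2)"
    using local_translation_left[OF local_translation_f x2] by blast
  define v where "v = f_left x1"
  have v1: "v = frac (x1 + c1)" unfolding v_def by (rule left_version_eq_translation[OF x1 \<delta>1 h1])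
  have v2: "v = frac (x2 + c2)" unfolding v_def eq by (rule left_version_eq_translation[OF x2 \<delta>2 h2])
  define \<epsilon> where "\<epsilon> = min \<delta>1 \<delta>2 / 2"
  have \<epsilon>: "\<epsilon> > 0" "\<epsilon> < \<delta>1" "\<epsilon> < \<delta>2" using \<delta>1 \<delta>2 unfolding \<epsilon>_def by auto
  have "f (frac (x1 - \<epsilon>)) = frac (v - \<epsilon>)"
    using h1 \<epsilon> frac_shift[OF v1, of "x1 - \<epsilon>"] by simp
  moreover have "f (frac (x2 - \<epsilon>)) = frac (v - \<epsilon>)"
    using h2 \<epsilon> frac_shift[OF v2, of "x2 - \<epsilon>"] by simp
  ultimately have "frac (x1 - \<epsilon>) = frac (x2 - \<epsilon>)"
    using inj_f frac_in_unit_interval by (metis inj_onD)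
  then obtain n where n: "x1 - \<epsilon> = x2 - \<epsilon> + of_int n" by (rule frac_eqE)
  hence "\<bar>of_int n\<bar> < (1::real)" using x1 x2 by auto
  hence "n = 0" by linarith
  thus False using n ne by simp
qed

lemma inj_on_funpow_f_left: "inj_on (f_left ^^ n) {0..<1}"
  using inj_on_funpow[OF inj_on_f_left f_left_in] .

lemma disc_funpow: "disc (f ^^ n) = {x \<in> {0..<1}. (f ^^ n) x \<noteq> (f_left ^^ n) x}"
  unfolding disc_def
  using circ_cont_iff_left_version_eq[OF local_translation_funpow[OF local_translation_f, of n]]
    left_version_funpow[OF local_translation_f, of _ n] by auto

end

context interval_exchange
begin

lemma fundamental_in_disc: "fundamental f y \<Longrightarrow> y \<in> disc f"
  unfolding fundamental_def disc_np_def by simp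

lemma fundamental_in: "fundamental f y \<Longrightarrow> y \<in> {0..<1}"
  using fundamental_in_disc disc_subset_unit_interval[of f] by blast

lemma circ_cont_f_iff: "x \<in> {0..<1} \<Longrightarrow> circ_cont f x \<longleftrightarrow> x \<notin> disc f"
  unfolding disc_def by simp

lemma finite_fundamental: "finite {y. fundamental f y}"
  using finite_disc fundamental_in_disc by (metis finite_subset mem_Collect_eq subsetI)

lemma funpow_f_fundamental_ne:
  assumes "fundamental f y" and "p > 0"
  shows "(f ^^ p) y \<noteq> y"
  using assms fundamental_in[OF assms(1)] unfolding fundamental_def disc_np_def per_def by blast

lemma funpow_f_inv_fundamental_not_disc:
  assumes y: "fundamental f y" and i: "i \<ge> 1"
  shows "(f_inv ^^ i) y \<notin> disc f"
  using y i funpow_f_inv_in[OF fundamental_in[OF y]] unfolding fundamental_def disc_def by blast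

lemma funpow_f_left_funpow_f_inv_fundamental:
  assumes y: "fundamental f y"
  shows "(f_left ^^ i) ((f_inv ^^ i) y) = y"
proof (induction i)
  case (Suc i)
  define w where "w = (f_inv ^^ Suc i) y"
  have w: "w \<in> {0..<1}" unfolding w_def using funpow_f_inv_in fundamental_in[OF y] by blast
  have "w \<notin> disc f" unfolding w_def by (rule funpow_f_inv_fundamental_not_disc[OF y]) simp
  hence "f_left w = f w" using mem_disc_iff w by blast
  also have "f w = (f_inv ^^ i) y" unfolding w_def using f_f_inv funpow_f_inv_in fundamental_in[OF y] by simp
  finally have "(f_left ^^ Suc i) w = (f_left ^^ i) ((f_inv ^^ i) y)" by (simp add: funpow_swap1)
  thus ?case using Suc.IH unfolding w_def by simp
qed simp

lemma funpow_f_left_fundamental_ne: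
  assumes y: "fundamental f y" and p: "p > 0"
  shows "(f_left ^^ p) y \<noteq> y"
proof
  assume "(f_left ^^ p) y = y"
  hence "(f_left ^^ p) ((f_inv ^^ p) y) = (f_left ^^ p) y"
    using funpow_f_left_funpow_f_inv_fundamental[OF y] by simp
  hence "(f_inv ^^ p) y = y"
    using inj_onD[OF inj_on_funpow_f_left] funpow_f_inv_in fundamental_in[OF y] by blast
  hence "(f ^^ p) y = y" using funpow_f_funpow_f_inv[OF fundamental_in[OF y], of p] by simp
  thus False using funpow_f_fundamental_ne[OF y p] by simp
qed

lemma finite_disc_visits:
  assumes y: "fundamental f y"
  shows "finite {m. (f ^^ m) y \<in> disc f}" and "finite {m. (f_left ^^ m) y \<in> disc f}"
proof -
  have "inj (\<lambda>m. (f ^^ m) y)"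
    using inj_orbit_if_aperiodic[OF inj_f f_in fundamental_in[OF y] funpow_f_fundamental_ne[OF y]] .
  from finite_vimageI[OF finite_disc this] show "finite {m. (f ^^ m) y \<in> disc f}"
    by (simp add: vimage_def)
  have "inj (\<lambda>m. (f_left ^^ m) y)"
    using inj_orbit_if_aperiodic[OF inj_on_f_left f_left_in fundamental_in[OF y]
        funpow_f_left_fundamental_ne[OF y]] .
  from finite_vimageI[OF finite_disc this] show "finite {m. (f_left ^^ m) y \<in> disc f}"
    by (simp add: vimage_def)
qed

lemma stab_time_exists:
  "\<exists>n0. n0 > 0 \<and> (\<forall>n\<ge>n0. \<forall>x. fundamental f x \<longrightarrow>
       circ_cont f ((f ^^ n) x) \<and> circ_cont f ((f_left ^^ n) x))"
proof -
  define M where "M = insert 0 (\<Union>y\<in>{y. fundamental f y}.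
      {m. (f ^^ m) y \<in> disc f} \<union> {m. (f_left ^^ m) y \<in> disc f})"
  have "finite M" unfolding M_def using finite_fundamental finite_disc_visits by auto
  hence "(f ^^ n) x \<notin> disc f \<and> (f_left ^^ n) x \<notin> disc f"
    if "Suc (Max M) \<le> n" "fundamental f x" for n x
    using that Max_ge[of M n] unfolding M_def by fastforce
  thus ?thesis using circ_cont_f_iff funpow_f_in funpow_f_left_in fundamental_in
    by (intro exI[of _ "Suc (Max M)"]) auto
qed

lemma not_disc_after_stab_time:
  assumes "fundamental f x" and "stab_time f \<le> n"
  shows "(f ^^ n) x \<notin> disc f" and "(f_left ^^ n) x \<notin> disc f"
  using LeastI_ex[OF stab_time_exists] assms circ_cont_f_iff funpow_f_in funpow_f_left_in fundamental_in
  unfolding stab_time_def[symmetric] by blast+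

lemma funpow_f_eq_f_left_iff_stab_time:
  assumes y: "fundamental f y" and m: "stab_time f \<le> m"
  shows "(f ^^ m) y = (f_left ^^ m) y \<longleftrightarrow> (f ^^ stab_time f) y = (f_left ^^ stab_time f) y"
  using m
proof (induction rule: dec_induct)
  case (step m)
  have "(f_left ^^ m) y \<notin> disc f" using not_disc_after_stab_time(2)[OF y step.hyps(1)] .
  hence "(f_left ^^ Suc m) y = f ((f_left ^^ m) y)"
    using mem_disc_iff funpow_f_left_in[OF fundamental_in[OF y]] by simp
  hence "(f ^^ Suc m) y = (f_left ^^ Suc m) y \<longleftrightarrow> (f ^^ m) y = (f_left ^^ m) y"
    using inj_f funpow_f_in funpow_f_left_in fundamental_in[OF y] by (simp add: inj_on_eq_iff)
  thus ?case using step.IH by simp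
qed simp

lemma funpow_f_left_eq_funpow_f:
  assumes "x \<in> {0..<1}" and "\<forall>i<m. (f ^^ i) x \<notin> disc f"
  shows "(f_left ^^ m) x = (f ^^ m) x"
  using assms
proof (induction m)
  case (Suc m)
  thus ?case using mem_disc_iff funpow_f_in by simp
qed simp

end

section \<open>Counting the discontinuities of the iterates\<close>

context interval_exchange
begin

abbreviation nonres :: "real set" where "nonres \<equiv> {y. nonresolving f y}"
abbreviation fund :: "real set" where "fund \<equiv> {y. fundamental f y}"

definition preorbit :: "real \<times> nat \<Rightarrow> real" where
  "preorbit = (\<lambda>(y, j). (f_inv ^^ j) y)"

text \<open>For a discontinuity that is not fundamental the set below is nonempty
  (see \<open>exists_backward_return\<close>), so the \<open>LEAST\<close> is meaningful there.\<close>

definition backward_return :: "real \<Rightarrow> nat" where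
  "backward_return y = (LEAST i. i \<ge> 1 \<and> (f_inv ^^ i) y \<in> disc f)"

definition nonfundamental_chains :: "real set" where
  "nonfundamental_chains = preorbit ` (SIGMA y : disc f - fund. {..<backward_return y})"

lemma finite_nonres: "finite nonres" and finite_fund: "finite fund"
  using finite_fundamental by (auto intro: finite_subset simp: nonresolving_def)

lemma finite_nonfundamental_chains: "finite nonfundamental_chains"
  unfolding nonfundamental_chains_def using finite_disc by (intro finite_imageI finite_SigmaI) auto

lemma nonresolving_funpow_ne:
  "nonresolving f y \<Longrightarrow> stab_time f \<le> m \<Longrightarrow> (f ^^ m) y \<noteq> (f_left ^^ m) y"
  using funpow_f_eq_f_left_iff_stab_time unfolding nonresolving_def by blast

lemma resolving_funpow_eq:
  "fundamental f y \<Longrightarrow> \<not> nonresolving f y \<Longrightarrow> stab_time f \<le> m \<Longrightarrow> (f ^^ m) y = (f_left ^^ m) y"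
  using funpow_f_eq_f_left_iff_stab_time unfolding nonresolving_def by blast

lemma preorbit_eq_fundamental:
  assumes y': "fundamental f y'" and y: "y \<in> disc f" and jj: "j \<le> j'"
    and eq: "(f_inv ^^ j) y = (f_inv ^^ j') y'"
  shows "j = j' \<and> y = y'"
proof -
  define w where "w = (f_inv ^^ (j' - j)) y'"
  have "(f_inv ^^ j') y' = (f_inv ^^ j) w" unfolding w_def using jj
    by (metis funpow_add comp_apply le_add_diff_inverse)
  hence "(f ^^ j) ((f_inv ^^ j) y) = (f ^^ j) ((f_inv ^^ j) w)" using eq by simp
  hence yw: "y = w"
    using funpow_f_funpow_f_inv disc_subset_unit_interval[of f] y funpow_f_inv_in[OF fundamental_in[OF y']]
    unfolding w_def by auto
  show ?thesis
  proof (cases "j' - j \<ge> 1")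
    case True
    hence "w \<notin> disc f" unfolding w_def by (rule funpow_f_inv_fundamental_not_disc[OF y'])
    thus ?thesis using yw y by simp
  next
    case False
    hence "j = j'" using jj by simp
    thus ?thesis using yw unfolding w_def by simp
  qed
qed

lemma inj_on_preorbit_fundamental: "inj_on preorbit (fund \<times> J)"
proof (rule inj_onI, clarify)
  fix y j y' j' assume "fundamental f y" "fundamental f y'"
    and "preorbit (y, j) = preorbit (y', j')"
  thus "y = y' \<and> j = j'"
    using preorbit_eq_fundamental[of y' y j j'] preorbit_eq_fundamental[of y y' j' j]
      fundamental_in_disc unfolding preorbit_def by (cases "j \<le> j'") auto
qed

lemma exists_backward_return:
  assumes y: "y \<in> disc f" and nf: "\<not> fundamental f y"
  shows "\<exists>i\<ge>1. (f_inv ^^ i) y \<in> disc f"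
proof (cases "y \<in> per f")
  case True
  then obtain p where p: "p > 0" "(f ^^ p) y = y" unfolding per_def by blast
  have "(f_inv ^^ p) y = y" using funpow_f_inv_funpow_f[of y p] p y disc_subset_unit_interval[of f] by auto
  thus ?thesis using p y by (intro exI[of _ p]) auto
next
  case False
  then obtain i where "i \<ge> 1" "\<not> circ_cont f ((f_inv ^^ i) y)"
    using nf y unfolding fundamental_def disc_np_def by blast
  thus ?thesis using circ_cont_f_iff funpow_f_inv_in y disc_subset_unit_interval[of f] by blast
qed

text \<open>If \<open>j\<close> exceeded the length of the backward chain of \<open>f\<^sup>j x\<close>, the forward orbit of \<open>x\<close>
  would already meet \<open>D(f)\<close> at the start of that chain, before time \<open>j\<close>.\<close>

lemma mem_nonfundamental_chains:
  assumes x: "x \<in> {0..<1}" and before: "\<forall>i<j. (f ^^ i) x \<notin> disc f"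
    and y: "(f ^^ j) x \<in> disc f" and nf: "\<not> fundamental f ((f ^^ j) x)"
  shows "x \<in> nonfundamental_chains"
proof -
  define y where "y = (f ^^ j) x"
  define r where "r = backward_return y"
  have r: "r \<ge> 1" "(f_inv ^^ r) y \<in> disc f"
    using LeastI_ex[OF exists_backward_return[OF y nf]] unfolding r_def y_def backward_return_def
    by auto
  have "j < r"
  proof (rule ccontr)
    assume "\<not> j < r"
    hence "y = (f ^^ r) ((f ^^ (j - r)) x)" unfolding y_def
      by (metis funpow_add comp_apply le_add_diff_inverse not_less)
    hence "(f_inv ^^ r) y = (f ^^ (j - r)) x" using funpow_f_inv_funpow_f funpow_f_in[OF x] by metis
    moreover have "j - r < j" using r(1) \<open>\<not> j < r\<close> by simp
    ultimately show False using before r(2) by simp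
  qed
  moreover have "x = preorbit (y, j)"
    unfolding preorbit_def y_def using funpow_f_inv_funpow_f[OF x] by simp
  ultimately show ?thesis
    unfolding nonfundamental_chains_def r_def using y nf unfolding y_def by blast
qed

lemma disc_funpow_subset:
  "disc (f ^^ n) \<subseteq> nonfundamental_chains \<union> preorbit ` (nonres \<times> {..<n})
     \<union> preorbit ` (fund \<times> {n - stab_time f..<n})"
proof
  fix x assume "x \<in> disc (f ^^ n)"
  hence x: "x \<in> {0..<1}" and ne: "(f ^^ n) x \<noteq> (f_left ^^ n) x" using disc_funpow by auto
  have ex: "\<exists>j<n. (f ^^ j) x \<in> disc f" using funpow_f_left_eq_funpow_f[OF x] ne by metis
  define j where "j = (LEAST j. (f ^^ j) x \<in> disc f)"
  have y: "(f ^^ j) x \<in> disc f" unfolding j_def using ex by (metis LeastI)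
  have jn: "j < n" unfolding j_def using ex by (meson Least_le le_less_trans)
  have before: "\<forall>i<j. (f ^^ i) x \<notin> disc f" unfolding j_def using not_less_Least by blast
  define y where "y = (f ^^ j) x"
  have xy: "x = preorbit (y, j)"
    unfolding preorbit_def y_def using funpow_f_inv_funpow_f[OF x] by simp
  have "(f ^^ (n - j)) y \<noteq> (f_left ^^ (n - j)) y"
    using ne funpow_split[of j n f x] funpow_split[of j n f_left x] jn
      funpow_f_left_eq_funpow_f[OF x before] unfolding y_def by simp
  hence resolving: "n - stab_time f \<le> j" if "fundamental f y" "\<not> nonresolving f y"
    using resolving_funpow_eq[OF that, of "n - j"] by linarith
  consider "\<not> fundamental f y" | "nonresolving f y" | "fundamental f y" "\<not> nonresolving f y"
    by blast
  thus "x \<in> nonfundamental_chains \<union> preorbit ` (nonres \<times> {..<n})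
     \<union> preorbit ` (fund \<times> {n - stab_time f..<n})"
  proof cases
    case 1
    thus ?thesis using mem_nonfundamental_chains[OF x before y] unfolding y_def by blast
  next
    case 2
    thus ?thesis using xy jn by blast
  next
    case 3
    hence "(y, j) \<in> fund \<times> {n - stab_time f..<n}" using jn resolving by simp
    thus ?thesis using xy by (blast intro: rev_image_eqI)
  qed
qed

lemma finite_disc_funpow: "finite (disc (f ^^ n))"
  using disc_funpow_subset[of n] finite_nonfundamental_chains finite_nonres finite_fund
  by (meson finite_SigmaI finite_UnI finite_imageI finite_lessThan finite_atLeastLessThan finite_subset)

lemma card_disc_funpow_le:
  "card (disc (f ^^ n)) \<le> card nonfundamental_chains + card nonres * n + card fund * stab_time f"
proof -
  have "card (disc (f ^^ n)) \<le> card (nonfundamental_chains \<union> preorbit ` (nonres \<times> {..<n})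
      \<union> preorbit ` (fund \<times> {n - stab_time f..<n}))"
    using disc_funpow_subset finite_nonfundamental_chains finite_nonres finite_fund
    by (intro card_mono) auto
  also have "\<dots> \<le> card nonfundamental_chains + card (preorbit ` (nonres \<times> {..<n}))
      + card (preorbit ` (fund \<times> {n - stab_time f..<n}))"
    by (meson add_mono_thms_linordered_semiring(3) card_Un_le order_trans)
  also have "card (preorbit ` (nonres \<times> {..<n})) \<le> card nonres * n"
    using card_image_le[of "nonres \<times> {..<n}" preorbit] finite_nonres by (simp add: card_cartesian_product)
  also have "card (preorbit ` (fund \<times> {n - stab_time f..<n})) \<le> card (fund \<times> {n - stab_time f..<n})"
    using finite_fund by (intro card_image_le) simp
  also have "\<dots> \<le> card fund * stab_time f"
    by (auto simp: card_cartesian_product)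
  finally show ?thesis by simp
qed

lemma card_disc_funpow_ge:
  assumes n: "stab_time f \<le> n"
  shows "card nonres * (n - stab_time f + 1) \<le> card (disc (f ^^ n))"
proof -
  have "preorbit ` (nonres \<times> {..n - stab_time f}) \<subseteq> disc (f ^^ n)"
  proof clarify
    fix y j assume y: "nonresolving f y" and j: "j \<le> n - stab_time f"
    have fy: "fundamental f y" using y unfolding nonresolving_def by blast
    have jn: "j \<le> n" using j n by simp
    have "(f ^^ n) ((f_inv ^^ j) y) = (f ^^ (n - j)) y"
      using funpow_split[OF jn, of f] funpow_f_funpow_f_inv[OF fundamental_in[OF fy]] by simp
    moreover have "(f_left ^^ n) ((f_inv ^^ j) y) = (f_left ^^ (n - j)) y"
      using funpow_split[OF jn, of f_left] funpow_f_left_funpow_f_inv_fundamental[OF fy] by simp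
    moreover have "(f ^^ (n - j)) y \<noteq> (f_left ^^ (n - j)) y"
      using nonresolving_funpow_ne[OF y] j n by simp
    ultimately show "preorbit (y, j) \<in> disc (f ^^ n)"
      unfolding preorbit_def disc_funpow using funpow_f_inv_in fundamental_in[OF fy] by simp
  qed
  moreover have "inj_on preorbit (nonres \<times> {..n - stab_time f})"
    by (rule inj_on_subset[OF inj_on_preorbit_fundamental]) (auto simp: nonresolving_def)
  ultimately have "card (nonres \<times> {..n - stab_time f}) \<le> card (disc (f ^^ n))"
    using card_inj_on_le finite_disc_funpow by blast
  thus ?thesis by (simp add: card_cartesian_product)
qed

end

context interval_exchange
begin

lemma card_disc_funpow_linear:
  "\<exists>K. \<forall>n. \<bar>real (card (disc (f ^^ n))) - real (card nonres) * real n\<bar> \<le> K"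
proof -
  define k where "k = card nonres"
  define n0 where "n0 = stab_time f"
  define C where "C = card nonfundamental_chains + card fund * n0"
  have "\<bar>real (card (disc (f ^^ n))) - real k * real n\<bar> \<le> real C + real k * real n0" for n
  proof -
    have "card (disc (f ^^ n)) \<le> C + k * n"
      using card_disc_funpow_le[of n] unfolding C_def k_def n0_def by linarith
    hence up: "real (card (disc (f ^^ n))) \<le> real C + real k * real n" by (metis of_nat_add of_nat_le_iff of_nat_mult)
    have "real k * real n \<le> real (card (disc (f ^^ n))) + real k * real n0"
    proof (cases "n0 \<le> n")
      case True
      have "k * (n - n0 + 1) \<le> card (disc (f ^^ n))"
        using card_disc_funpow_ge True unfolding k_def n0_def by blast
      hence "real k * real (n - n0 + 1) \<le> real (card (disc (f ^^ n)))"
        by (metis of_nat_le_iff of_nat_mult)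
      moreover have "real k * real (n - n0 + 1) = real k * real n - real k * real n0 + real k"
        using True by (simp add: of_nat_diff algebra_simps)
      ultimately show ?thesis by simp
    next
      case False
      thus ?thesis by (simp add: mult_left_mono add_increasing)
    qed
    moreover have "0 \<le> real k * real n0" by simp
    ultimately show ?thesis using up unfolding abs_le_iff by linarith
  qed
  thus ?thesis unfolding k_def by blast
qed

lemma funpow_f_inv_eq_inv_into:
  assumes x: "x \<in> {0..<1}"
  shows "(f_inv ^^ n) x = inv_into {0..<1} (f ^^ n) x"
  using inv_into_f_f[OF inj_on_funpow_f[of n] funpow_f_inv_in[OF x, of n]]
  by (simp add: funpow_f_funpow_f_inv[OF x])

lemma dnum_ipow: "dnum (ipow f n) = card (disc (f ^^ nat \<bar>n\<bar>))"
proof (cases "n \<ge> 0")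
  case True
  thus ?thesis unfolding dnum_def ipow_def by simp
next
  case False
  define m where "m = nat \<bar>n\<bar>"
  have "disc (ipow f n) = disc (inv_into {0..<1} (f ^^ m))"
    using False funpow_f_inv_eq_inv_into unfolding ipow_def m_def by (intro disc_cong) simp
  also have "\<dots> = (f ^^ m) ` disc (f ^^ m)"
    by (rule disc_inv_into[OF local_translation_funpow[OF local_translation_f] bij_betw_funpow[OF bij_f]])
  finally have "dnum (ipow f n) = card ((f ^^ m) ` disc (f ^^ m))" unfolding dnum_def by simp
  also have "\<dots> = card (disc (f ^^ m))"
  proof (rule card_image)
    show "inj_on (f ^^ m) (disc (f ^^ m))"
      by (rule inj_on_subset[OF inj_on_funpow_f]) (auto simp: disc_def)
  qed
  finally show ?thesis unfolding m_def .
qed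

lemma all_eventually_resolving_iff:
  "(\<forall>x. fundamental f x \<longrightarrow> eventually_resolving f x) \<longleftrightarrow> card nonres = 0"
  using finite_nonres unfolding eventually_resolving_def nonresolving_def by auto

end

section \<open>Growth of the number of discontinuities\<close>

lemma tendsto_div_abs_of_int:
  fixes g :: "int \<Rightarrow> real"
  assumes bound: "\<And>n. \<bar>g n - c * \<bar>real_of_int n\<bar>\<bar> \<le> K"
    and F: "filterlim (\<lambda>n. \<bar>real_of_int n\<bar>) at_top F"
  shows "((\<lambda>n. g n / \<bar>real_of_int n\<bar>) \<longlongrightarrow> c) F"
proof (rule LIM_zero_cancel, rule tendsto_0_le)
  show "((\<lambda>n. inverse \<bar>real_of_int n\<bar>) \<longlongrightarrow> 0) F" by (rule tendsto_inverse_0_at_top[OF F])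
  have "\<forall>\<^sub>F n in F. \<bar>real_of_int n\<bar> \<ge> 1" using F by (simp add: filterlim_at_top)
  thus "\<forall>\<^sub>F n in F. norm (g n / \<bar>real_of_int n\<bar> - c) \<le> norm (inverse \<bar>real_of_int n\<bar>) * K"
  proof eventually_elim
    case (elim n)
    hence "g n / \<bar>real_of_int n\<bar> - c = (g n - c * \<bar>real_of_int n\<bar>) * inverse \<bar>real_of_int n\<bar>"
      by (simp add: field_simps)
    moreover have "\<bar>g n - c * \<bar>real_of_int n\<bar>\<bar> * inverse \<bar>real_of_int n\<bar> \<le> K * inverse \<bar>real_of_int n\<bar>"
      using bound[of n] by (rule mult_right_mono) simp
    ultimately show ?case by (simp add: abs_mult mult.commute)
  qed
qed

lemma filterlim_abs_of_int_at_top: "filterlim (\<lambda>n::int. \<bar>real_of_int n\<bar>) at_top at_top"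
  using filterlim_abs_real filterlim_compose filterlim_real_of_int_at_top by blast

lemma filterlim_abs_of_int_at_bot: "filterlim (\<lambda>n::int. \<bar>real_of_int n\<bar>) at_top at_bot"
  unfolding filterlim_at_top eventually_at_bot_linorder
proof (intro allI exI impI)
  fix Z :: real and n :: int assume "n \<le> - \<lceil>Z\<rceil>"
  hence "real_of_int n \<le> - real_of_int \<lceil>Z\<rceil>" by (metis of_int_le_iff of_int_minus)
  thus "Z \<le> \<bar>real_of_int n\<bar>" using le_of_int_ceiling[of Z] by linarith
qed

theorem proposition2p3:
  fixes f :: "real \<Rightarrow> real"
  assumes "iet f"
    and "\<forall>n::nat>0. \<exists>x\<in>{0..<1}. (f ^^ n) x \<noteq> x"
  shows "(\<forall>x. fundamental f x \<longrightarrow> eventually_resolving f x)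
           \<noteq> (card {x. nonresolving f x} \<ge> 1)
     \<and> ((\<forall>x. fundamental f x \<longrightarrow> eventually_resolving f x) \<longrightarrow>
           (\<exists>B. \<forall>n::int. dnum (ipow f n) \<le> B))
     \<and> (card {x. nonresolving f x} \<ge> 1 \<longrightarrow>
           ((\<lambda>n::int. real (dnum (ipow f n)) / \<bar>real_of_int n\<bar>)
              \<longlongrightarrow> real (card {x. nonresolving f x})) at_top
         \<and> ((\<lambda>n::int. real (dnum (ipow f n)) / \<bar>real_of_int n\<bar>)
              \<longlongrightarrow> real (card {x. nonresolving f x})) at_bot)"
proof -
  interpret interval_exchange f by unfold_locales (rule assms(1))
  obtain K where K: "\<And>n. \<bar>real (card (disc (f ^^ n))) - real (card nonres) * real n\<bar> \<le> K"
    using card_disc_funpow_linear by blast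
  have bound: "\<bar>real (dnum (ipow f n)) - real (card nonres) * \<bar>real_of_int n\<bar>\<bar> \<le> K" for n
    using K[of "nat \<bar>n\<bar>"] by (simp add: dnum_ipow)
  have "\<exists>B. \<forall>n::int. dnum (ipow f n) \<le> B" if "card nonres = 0"
  proof (intro exI allI)
    fix n :: int
    have "real (dnum (ipow f n)) \<le> K" using bound[of n] that by simp
    thus "dnum (ipow f n) \<le> nat \<lceil>K\<rceil>" by (metis ceiling_mono ceiling_of_nat nat_int nat_mono)
  qed
  moreover have "((\<lambda>n. real (dnum (ipow f n)) / \<bar>real_of_int n\<bar>) \<longlongrightarrow> real (card nonres)) at_top"
    and "((\<lambda>n. real (dnum (ipow f n)) / \<bar>real_of_int n\<bar>) \<longlongrightarrow> real (card nonres)) at_bot"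
    using tendsto_div_abs_of_int[OF bound] filterlim_abs_of_int_at_top filterlim_abs_of_int_at_bot
    by blast+
  ultimately show ?thesis using all_eventually_resolving_iff by auto
qed

end
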